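(* Let $K,G,\eta,\bar\eta,\xi,c_0>0$ and let $H:\mathbb R_+\to\mathbb R_+$ be nondecreasing, strongly semismooth, with $H(0)=0$. For $\boldsymbol\sigma\in\mathbb R^{3\times3}_{sym}$ and $\kappa\ge0$ let $f(\boldsymbol\sigma,\kappa)=\hat f(p(\boldsymbol\sigma),\varrho(\boldsymbol\sigma),\kappa)=\sqrt{\tfrac12}\,\varrho(\boldsymbol\sigma)+\eta\, p(\boldsymbol\sigma)-\xi(c_0+\kappa)$. Let a trial stress $\boldsymbol\sigma^{tr}\in\mathbb R^{3\times3}_{sym}$ and $\bar\varepsilon^{p,tr}\ge0$ be given, with $p^{tr}=p(\boldsymbol\sigma^{tr})$, $\mathbf s^{tr}=\mathbf s(\boldsymbol\sigma^{tr})$, $\varrho^{tr}=\|\mathbf s^{tr}\|$, $\mathbf n^{tr}=\mathbf s^{tr}/\varrho^{tr}$, and assume $f(\boldsymbol\sigma^{tr},H(\bar\varepsilon^{p,tr}))>0$. Consider the problem (P): find $\boldsymbol\sigma\in\mathbb R^{3\times3}_{sym}$, $\bar\varepsilon^p$, $\triangle\lambda$ such that $$\boldsymbol\sigma=\boldsymbol\sigma^{tr}-\triangle\lambda\big(G\sqrt2\,\hat{\mathbf n}+K\bar\eta\mathbf I\big)\ \text{for some }\hat{\mathbf n}\in\partial\varrho(\boldsymbol\sigma),\quad \bar\varepsilon^p=\bar\varepsilon^{p,tr}+\triangle\lambda\xi,\quad f(\boldsymbol\sigma,H(\bar\varepsilon^p))=0.$$ If $(\boldsymbol\sigma,\bar\varepsilon^p,\triangle\lambda)$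 solves (P) and $p=p(\boldsymbol\sigma)$, $\varrho=\varrho(\boldsymbol\sigma)$, then $(p,\varrho,\bar\varepsilon^p,\triangle\lambda)$ solves the system (R): $$p=p^{tr}-\triangle\lambda K\bar\eta,\quad \varrho=(\varrho^{tr}-\triangle\lambda G\sqrt2)^+,\quad \bar\varepsilon^p=\bar\varepsilon^{p,tr}+\triangle\lambda\xi,\quad \hat f(p,\varrho,H(\bar\varepsilon^p))=0.$$ Conversely, if $(p,\varrho,\bar\varepsilon^p,\triangle\lambda)$ solves (R), then $(\boldsymbol\sigma,\bar\varepsilon^p,\triangle\lambda)$ solves (P), where $\boldsymbol\sigma=\boldsymbol\sigma^{tr}-\triangle\lambda(G\sqrt2\,\mathbf n^{tr}+K\bar\eta\mathbf I)$ if $\varrho^{tr}>\triangle\lambda G\sqrt2$ and $\boldsymbol\sigma=(p^{tr}-\triangle\lambda K\bar\eta)\mathbf I$ if $\varrho^{tr}\le\triangle\lambda G\sqrt2$.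
   Context: $\mathbb R^{3\times3}_{sym}$: real symmetric $3\times3$ matrices with Frobenius product ":" and norm; $\mathbf I$ identity; $p(\boldsymbol\sigma)=\frac13\mathbf I:\boldsymbol\sigma$, $\mathbf s(\boldsymbol\sigma)=\boldsymbol\sigma-p(\boldsymbol\sigma)\mathbf I$, $\varrho(\boldsymbol\sigma)=\|\mathbf s(\boldsymbol\sigma)\|$; $(x)^+=\max\{0,x\}$. The subdifferential of $\varrho$ is $\partial\varrho(\boldsymbol\sigma)=\{\mathbf s(\boldsymbol\sigma)/\varrho(\boldsymbol\sigma)\}$ if $\varrho(\boldsymbol\sigma)>0$ and $\partial\varrho(\boldsymbol\sigma)=\{\hat{\mathbf n}\in\mathbb R^{3\times3}_{sym}:\mathbf I:\hat{\mathbf n}=0,\ \|\hat{\mathbf n}\|\le1\}$ if $\varrho(\boldsymbol\sigma)=0$. A function is strongly semismooth if it is locally Lipschitz, directionally differentiable, and $F(x+h)-F(x)-Vh=O(\|h\|^2)$ for all $V$ in the Clarke generalized Jacobian $\partial F(x+h)$ as $h\to0$. *)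

theory Defs
  imports "HOL-Analysis.Analysis"
begin

type_synonym mat3 = "real^3^3"

definition sym3 :: "mat3 \<Rightarrow> bool" where
  "sym3 A \<longleftrightarrow> transpose A = A"

definition frob :: "mat3 \<Rightarrow> mat3 \<Rightarrow> real" (infixl ":\<^sub>F" 70) where
  "frob A B = (\<Sum>i\<in>UNIV. \<Sum>j\<in>UNIV. A$i$j * B$i$j)"

definition fnorm :: "mat3 \<Rightarrow> real" where
  "fnorm A = sqrt (frob A A)"

definition Id3 :: mat3 where "Id3 = mat 1"

definition pr :: "mat3 \<Rightarrow> real" where
  "pr \<sigma> = frob Id3 \<sigma> / 3"

definition dev :: "mat3 \<Rightarrow> mat3" where
  "dev \<sigma> = \<sigma> - pr \<sigma> *\<^sub>R Id3"

definition rho :: "mat3 \<Rightarrow> real" where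
  "rho \<sigma> = fnorm (dev \<sigma>)"

definition subdiff_rho :: "mat3 \<Rightarrow> mat3 set" where
  "subdiff_rho \<sigma> =
     (if rho \<sigma> > 0 then {(1 / rho \<sigma>) *\<^sub>R dev \<sigma>}
      else {n. sym3 n \<and> frob Id3 n = 0 \<and> fnorm n \<le> 1})"

definition pos_part :: "real \<Rightarrow> real" where
  "pos_part x = max 0 x"

definition fhat :: "real \<Rightarrow> real \<Rightarrow> real \<Rightarrow> real \<Rightarrow> real \<Rightarrow> real \<Rightarrow> real" where
  "fhat \<eta> \<xi> c0 p \<rho> \<kappa> = sqrt (1/2) * \<rho> + \<eta> * p - \<xi> * (c0 + \<kappa>)"

definition fyield :: "real \<Rightarrow> real \<Rightarrow> real \<Rightarrow> mat3 \<Rightarrow> real \<Rightarrow> real" where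
  "fyield \<eta> \<xi> c0 \<sigma> \<kappa> = fhat \<eta> \<xi> c0 (pr \<sigma>) (rho \<sigma>) \<kappa>"

definition clarke_jac :: "real set \<Rightarrow> (real \<Rightarrow> real) \<Rightarrow> real \<Rightarrow> real set" where
  "clarke_jac S F x = convex hull {v. \<exists>xs ds. (\<forall>k. xs k \<in> interior S \<and>
       (F has_real_derivative ds k) (at (xs k))) \<and> xs \<longlonglongrightarrow> x \<and> ds \<longlonglongrightarrow> v}"

definition strongly_semismooth_on :: "real set \<Rightarrow> (real \<Rightarrow> real) \<Rightarrow> bool" where
  "strongly_semismooth_on S F \<longleftrightarrow>
     (\<forall>x\<in>S. \<exists>e>0. \<exists>L. \<forall>y\<in>S. \<forall>z\<in>S. \<bar>y - x\<bar> < e \<and> \<bar>z - x\<bar> < e \<longrightarrow>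
         \<bar>F y - F z\<bar> \<le> L * \<bar>y - z\<bar>) \<and>
     (\<forall>x\<in>S. \<forall>h. (\<forall>\<^sub>F t in at_right 0. x + t * h \<in> S) \<longrightarrow>
         (\<exists>d. ((\<lambda>t. (F (x + t * h) - F x) / t) \<longlongrightarrow> d) (at_right 0))) \<and>
     (\<forall>x\<in>S. \<exists>C e. e > 0 \<and> (\<forall>h. \<bar>h\<bar> < e \<and> x + h \<in> S \<longrightarrow>
         (\<forall>V\<in>clarke_jac S F (x + h). \<bar>F (x + h) - F x - V * h\<bar> \<le> C * h\<^sup>2)))"

end

theory Submission
  imports Defs
begin

text \<open>Every \<open>n \<in> \<partial>\<rho>(\<sigma>)\<close> is trace free, so the
  return map \<open>\<sigma> = \<sigma>\<^sup>t\<^sup>r - \<Delta>\<lambda> (G\<surd>2 n + K\<eta>\<^sub>b I)\<close> splits into the volumetric update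
  \<open>p = p\<^sup>t\<^sup>r - \<Delta>\<lambda> K\<eta>\<^sub>b\<close> and the deviatoric update \<open>s\<^sup>t\<^sup>r = s + \<Delta>\<lambda> G\<surd>2 n\<close>.
  If \<open>\<rho>(\<sigma>) > 0\<close> then \<open>n = s/\<rho>\<close> is parallel to \<open>s\<close>, so \<open>\<rho>\<^sup>t\<^sup>r = \<rho> + \<Delta>\<lambda> G\<surd>2\<close>;
  if \<open>\<rho>(\<sigma>) = 0\<close> then \<open>\<rho>\<^sup>t\<^sup>r = \<Delta>\<lambda> G\<surd>2 \<parallel>n\<parallel> \<le> \<Delta>\<lambda> G\<surd>2\<close>. Either way
  \<open>\<rho> = (\<rho>\<^sup>t\<^sup>r - \<Delta>\<lambda> G\<surd>2)\<^sup>+\<close>. Conversely, radial return along \<open>n\<^sup>t\<^sup>r\<close> or the projection to the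
  apex \<open>p I\<close> (with \<open>n = s\<^sup>t\<^sup>r / (\<Delta>\<lambda> G\<surd>2)\<close>) realise any solution of the reduced system.\<close>

lemma frob_eq_inner: "frob A B = inner A B"
  unfolding frob_def inner_vec_def by (simp add: inner_real_def)

lemma fnorm_eq_norm: "fnorm A = norm A"
  unfolding fnorm_def frob_eq_inner by (simp add: norm_eq_sqrt_inner)

lemma frob_Id3_Id3: "frob Id3 Id3 = 3"
  unfolding frob_def Id3_def mat_def by (simp add: if_distrib cong: if_cong)

lemma linear_pr: "linear pr"
  unfolding pr_def frob_eq_inner
  by (intro linearI) (simp_all add: inner_add_right add_divide_distrib)

lemma linear_dev: "linear dev"
  unfolding dev_def
  by (intro linearI) (simp_all add: linear_add[OF linear_pr] linear_scale[OF linear_pr] algebra_simps)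

lemmas pr_add [simp] = linear_add[OF linear_pr]
  and pr_diff [simp] = linear_diff[OF linear_pr]
  and pr_scaleR [simp] = linear_scale[OF linear_pr]
  and dev_add [simp] = linear_add[OF linear_dev]
  and dev_diff [simp] = linear_diff[OF linear_dev]
  and dev_scaleR [simp] = linear_scale[OF linear_dev]

lemma pr_Id3 [simp]: "pr Id3 = 1"
  unfolding pr_def by (simp add: frob_Id3_Id3)

lemma dev_Id3 [simp]: "dev Id3 = 0"
  unfolding dev_def by simp

lemma pr_eq_0_iff: "pr A = 0 \<longleftrightarrow> frob Id3 A = 0"
  unfolding pr_def by simp

lemma pr_dev [simp]: "pr (dev A) = 0"
  unfolding dev_def by simp

lemma dev_eq_self: "pr A = 0 \<Longrightarrow> dev A = A"
  unfolding dev_def by simp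

lemma pr_dev_decomposition: "A = pr A *\<^sub>R Id3 + dev A"
  unfolding dev_def by simp

lemma rho_eq_norm_dev: "rho A = norm (dev A)"
  unfolding rho_def fnorm_eq_norm ..

lemma rho_nonneg: "rho A \<ge> 0"
  by (simp add: rho_eq_norm_dev)

lemma rho_eq_0_iff: "rho A = 0 \<longleftrightarrow> dev A = 0"
  by (simp add: rho_eq_norm_dev)

lemma sym3_diff: "sym3 A \<Longrightarrow> sym3 B \<Longrightarrow> sym3 (A - B)"
  and sym3_add: "sym3 A \<Longrightarrow> sym3 B \<Longrightarrow> sym3 (A + B)"
  and sym3_scaleR: "sym3 A \<Longrightarrow> sym3 (c *\<^sub>R A)"
  and sym3_Id3: "sym3 Id3"
  unfolding sym3_def Id3_def by (auto simp: transpose_def vec_eq_iff mat_def)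

lemma sym3_dev: "sym3 A \<Longrightarrow> sym3 (dev A)"
  unfolding dev_def by (simp add: sym3_diff sym3_scaleR sym3_Id3)

lemma pr_subdiff_rho: "n \<in> subdiff_rho A \<Longrightarrow> pr n = 0"
  by (cases "rho A > 0") (auto simp: subdiff_rho_def pr_eq_0_iff[symmetric])

lemma return_map_pr_dev:
  assumes "pr n = 0" and "\<sigma> = \<tau> - dl *\<^sub>R (a *\<^sub>R n + b *\<^sub>R Id3)"
  shows "pr \<sigma> = pr \<tau> - dl * b" and "dev \<tau> = dev \<sigma> + (dl * a) *\<^sub>R n"
  unfolding assms(2) by (simp_all add: assms(1) dev_eq_self)

lemma rho_eq_pos_part_of_dev_shift:
  assumes n: "n \<in> subdiff_rho \<sigma>" and "c \<ge> 0" and shift: "dev \<tau> = dev \<sigma> + c *\<^sub>R n"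
  shows "rho \<sigma> = pos_part (rho \<tau> - c)"
proof (cases "rho \<sigma> > 0")
  case True
  then have "n = (1 / rho \<sigma>) *\<^sub>R dev \<sigma>"
    using n by (simp add: subdiff_rho_def)
  then have "dev \<tau> = (1 + c / rho \<sigma>) *\<^sub>R dev \<sigma>"
    by (simp add: shift scaleR_add_left)
  moreover have "1 + c / rho \<sigma> > 0"
    using True \<open>c \<ge> 0\<close> by (simp add: add_pos_nonneg)
  ultimately have "rho \<tau> = (1 + c / rho \<sigma>) * rho \<sigma>"
    by (simp add: rho_eq_norm_dev)
  also have "\<dots> = rho \<sigma> + c"
    using True by (simp add: distrib_right)
  finally show ?thesis
    using True \<open>c \<ge> 0\<close> by (simp add: pos_part_def)
next
  case False
  then have "rho \<sigma> = 0"
    using rho_nonneg[of \<sigma>] by simp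
  moreover have "rho \<tau> = c * norm n"
    using \<open>rho \<sigma> = 0\<close> \<open>c \<ge> 0\<close> by (simp add: shift rho_eq_0_iff rho_eq_norm_dev)
  moreover have "norm n \<le> 1"
    using n \<open>rho \<sigma> = 0\<close> by (simp add: subdiff_rho_def fnorm_eq_norm)
  ultimately show ?thesis
    using \<open>c \<ge> 0\<close> by (simp add: pos_part_def mult_left_le)
qed

lemma radial_return:
  assumes "0 \<le> dl * a" and "dl * a < rho \<tau>"
    and \<sigma>: "\<sigma> = \<tau> - dl *\<^sub>R (a *\<^sub>R ((1 / rho \<tau>) *\<^sub>R dev \<tau>) + b *\<^sub>R Id3)"
  shows "rho \<sigma> = rho \<tau> - dl * a" and "(1 / rho \<tau>) *\<^sub>R dev \<tau> \<in> subdiff_rho \<sigma>"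
proof -
  have "rho \<tau> > 0"
    using assms(1,2) by linarith
  have "dev \<tau> = dev \<sigma> + (dl * a) *\<^sub>R ((1 / rho \<tau>) *\<^sub>R dev \<tau>)"
    using return_map_pr_dev(2)[OF _ \<sigma>] by simp
  then have dev_\<sigma>: "dev \<sigma> = (1 - dl * a / rho \<tau>) *\<^sub>R dev \<tau>"
    by (simp add: algebra_simps)
  have "rho \<sigma> = \<bar>1 - dl * a / rho \<tau>\<bar> * rho \<tau>"
    by (simp add: dev_\<sigma> rho_eq_norm_dev)
  also have "\<dots> = rho \<tau> - dl * a"
    using assms(2) \<open>rho \<tau> > 0\<close> by (simp add: field_simps)
  finally show rho_\<sigma>: "rho \<sigma> = rho \<tau> - dl * a" .
  have "(1 / rho \<sigma>) *\<^sub>R dev \<sigma> = (1 / rho \<tau>) *\<^sub>R dev \<tau>"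
    using assms(2) \<open>rho \<tau> > 0\<close> by (simp add: dev_\<sigma> rho_\<sigma> field_simps)
  then show "(1 / rho \<tau>) *\<^sub>R dev \<tau> \<in> subdiff_rho \<sigma>"
    using assms(2) by (simp add: subdiff_rho_def rho_\<sigma>)
qed

lemma apex_return:
  assumes "sym3 \<tau>" and "0 \<le> dl * a" and "rho \<tau> \<le> dl * a"
    and \<sigma>: "\<sigma> = (pr \<tau> - dl * b) *\<^sub>R Id3"
  shows "rho \<sigma> = 0"
    and "\<exists>n\<in>subdiff_rho \<sigma>. \<sigma> = \<tau> - dl *\<^sub>R (a *\<^sub>R n + b *\<^sub>R Id3)"
proof -
  show rho_\<sigma>: "rho \<sigma> = 0"
    by (simp add: \<sigma> rho_eq_0_iff)
  define n where "n = (1 / (dl * a)) *\<^sub>R dev \<tau>"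
  have dev_\<tau>: "dev \<tau> = (dl * a) *\<^sub>R n"
  proof (cases "dl * a = 0")
    case True
    then have "rho \<tau> = 0"
      using assms(3) rho_nonneg[of \<tau>] by linarith
    then show ?thesis
      by (simp add: n_def rho_eq_0_iff)
  qed (simp add: n_def)
  have "norm n \<le> 1"
  proof (cases "dl * a = 0")
    case False
    then have "dl * a > 0"
      using assms(2) by linarith
    then have "norm n = rho \<tau> / (dl * a)"
      by (simp add: n_def rho_eq_norm_dev)
    then show ?thesis
      using \<open>dl * a > 0\<close> assms(3) by simp
  qed (simp only: n_def, simp)
  moreover have "sym3 n"
    unfolding n_def by (intro sym3_scaleR sym3_dev assms(1))
  moreover have "frob Id3 n = 0"
    by (simp add: n_def pr_eq_0_iff[symmetric])
  ultimately have "n \<in> subdiff_rho \<sigma>"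
    by (simp add: subdiff_rho_def rho_\<sigma> fnorm_eq_norm)
  moreover have "\<sigma> = \<tau> - dl *\<^sub>R (a *\<^sub>R n + b *\<^sub>R Id3)"
    by (subst (2) pr_dev_decomposition) (simp add: \<sigma> dev_\<tau> algebra_simps)
  ultimately show "\<exists>n\<in>subdiff_rho \<sigma>. \<sigma> = \<tau> - dl *\<^sub>R (a *\<^sub>R n + b *\<^sub>R Id3)"
    by blast
qed

lemma return_map_imp_reduced_system:
  assumes "0 \<le> dl" and "0 \<le> a" and n: "n \<in> subdiff_rho \<sigma>"
    and \<sigma>: "\<sigma> = \<tau> - dl *\<^sub>R (a *\<^sub>R n + b *\<^sub>R Id3)"
  shows "pr \<sigma> = pr \<tau> - dl * b" and "rho \<sigma> = pos_part (rho \<tau> - dl * a)"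
proof -
  note update = return_map_pr_dev[OF pr_subdiff_rho[OF n] \<sigma>]
  show "pr \<sigma> = pr \<tau> - dl * b"
    by (fact update(1))
  show "rho \<sigma> = pos_part (rho \<tau> - dl * a)"
    using assms(1,2) by (intro rho_eq_pos_part_of_dev_shift[OF n _ update(2)]) simp
qed

lemma reduced_system_imp_return_map:
  assumes "sym3 \<tau>" and "0 \<le> dl * a"
    and \<sigma>: "\<sigma> = (if rho \<tau> > dl * a
                then \<tau> - dl *\<^sub>R (a *\<^sub>R ((1 / rho \<tau>) *\<^sub>R dev \<tau>) + b *\<^sub>R Id3)
                else (pr \<tau> - dl * b) *\<^sub>R Id3)"
  shows "sym3 \<sigma> \<and> (\<exists>n\<in>subdiff_rho \<sigma>. \<sigma> = \<tau> - dl *\<^sub>R (a *\<^sub>R n + b *\<^sub>R Id3)) \<and>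
    pr \<sigma> = pr \<tau> - dl * b \<and> rho \<sigma> = pos_part (rho \<tau> - dl * a)"
proof (cases "rho \<tau> > dl * a")
  case True
  then have \<sigma>': "\<sigma> = \<tau> - dl *\<^sub>R (a *\<^sub>R ((1 / rho \<tau>) *\<^sub>R dev \<tau>) + b *\<^sub>R Id3)"
    by (simp add: \<sigma>)
  note radial = radial_return[OF assms(2) True \<sigma>']
  have "sym3 \<sigma>"
    unfolding \<sigma>' by (intro sym3_diff sym3_add sym3_scaleR sym3_dev sym3_Id3 assms(1))
  moreover have "\<exists>n\<in>subdiff_rho \<sigma>. \<sigma> = \<tau> - dl *\<^sub>R (a *\<^sub>R n + b *\<^sub>R Id3)"
    using radial(2) \<sigma>' by blast
  moreover have "pr \<sigma> = pr \<tau> - dl * b"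
    using return_map_pr_dev(1)[OF _ \<sigma>'] by simp
  ultimately show ?thesis
    using True radial(1) by (simp add: pos_part_def)
next
  case False
  then have \<sigma>': "\<sigma> = (pr \<tau> - dl * b) *\<^sub>R Id3"
    by (simp add: \<sigma>)
  note apex = apex_return[OF assms(1,2) _ \<sigma>']
  have "sym3 \<sigma>"
    unfolding \<sigma>' by (intro sym3_scaleR sym3_Id3)
  then show ?thesis
    using False apex \<sigma>' by (auto simp: pos_part_def)
qed

theorem theorem2:
  fixes K G \<eta> \<eta>b \<xi> c0 :: real and H :: "real \<Rightarrow> real"
    and \<sigma>tr :: mat3 and eptr :: real
  assumes "K > 0" "G > 0" "\<eta> > 0" "\<eta>b > 0" "\<xi> > 0" "c0 > 0"
    and "\<forall>x\<ge>0. H x \<ge> 0" "mono_on {0..} H" "strongly_semismooth_on {0..} H" "H 0 = 0"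
    and "sym3 \<sigma>tr" "eptr \<ge> 0"
    and "fyield \<eta> \<xi> c0 \<sigma>tr (H eptr) > 0"
  shows
    "(\<forall>\<sigma> ep dl. dl \<ge> 0 \<and> sym3 \<sigma> \<and>
        (\<exists>n\<in>subdiff_rho \<sigma>. \<sigma> = \<sigma>tr - dl *\<^sub>R ((G * sqrt 2) *\<^sub>R n + (K * \<eta>b) *\<^sub>R Id3)) \<and>
        ep = eptr + dl * \<xi> \<and> fyield \<eta> \<xi> c0 \<sigma> (H ep) = 0
      \<longrightarrow> pr \<sigma> = pr \<sigma>tr - dl * K * \<eta>b \<and>
          rho \<sigma> = pos_part (rho \<sigma>tr - dl * G * sqrt 2) \<and>
          ep = eptr + dl * \<xi> \<and> fhat \<eta> \<xi> c0 (pr \<sigma>) (rho \<sigma>) (H ep) = 0)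
   \<and>
    (\<forall>p r ep dl. dl \<ge> 0 \<and> p = pr \<sigma>tr - dl * K * \<eta>b \<and>
        r = pos_part (rho \<sigma>tr - dl * G * sqrt 2) \<and>
        ep = eptr + dl * \<xi> \<and> fhat \<eta> \<xi> c0 p r (H ep) = 0
      \<longrightarrow> (let \<sigma> = (if rho \<sigma>tr > dl * G * sqrt 2
                    then \<sigma>tr - dl *\<^sub>R ((G * sqrt 2) *\<^sub>R ((1 / rho \<sigma>tr) *\<^sub>R dev \<sigma>tr) + (K * \<eta>b) *\<^sub>R Id3)
                    else (pr \<sigma>tr - dl * K * \<eta>b) *\<^sub>R Id3)
          in sym3 \<sigma> \<and>
             (\<exists>n\<in>subdiff_rho \<sigma>. \<sigma> = \<sigma>tr - dl *\<^sub>R ((G * sqrt 2) *\<^sub>R n + (K * \<eta>b) *\<^sub>R Id3)) \<and>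
             ep = eptr + dl * \<xi> \<and> fyield \<eta> \<xi> c0 \<sigma> (H ep) = 0))"
proof ((rule conjI; intro allI impI), goal_cases reduction lifting)
  case (reduction \<sigma> ep dl)
  then obtain n where "dl \<ge> 0" and n: "n \<in> subdiff_rho \<sigma>"
    and \<sigma>: "\<sigma> = \<sigma>tr - dl *\<^sub>R ((G * sqrt 2) *\<^sub>R n + (K * \<eta>b) *\<^sub>R Id3)"
    and "ep = eptr + dl * \<xi>" and "fyield \<eta> \<xi> c0 \<sigma> (H ep) = 0" by blast
  moreover have "0 \<le> G * sqrt 2"
    using \<open>G > 0\<close> by simp
  ultimately show ?case
    using return_map_imp_reduced_system[OF \<open>dl \<ge> 0\<close> _ n \<sigma>] by (simp add: fyield_def mult.assoc)
next
  case (lifting p r ep dl)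
  then have "0 \<le> dl * (G * sqrt 2)" and ep: "ep = eptr + dl * \<xi>"
    and f: "fhat \<eta> \<xi> c0 (pr \<sigma>tr - dl * K * \<eta>b) (pos_part (rho \<sigma>tr - dl * G * sqrt 2)) (H ep) = 0"
    using \<open>G > 0\<close> by auto
  from reduced_system_imp_return_map[OF \<open>sym3 \<sigma>tr\<close> this(1) refl, of "K * \<eta>b"]
  show ?case
    unfolding Let_def fyield_def mult.assoc[symmetric] using ep f by (simp only: simp_thms)
qed

end
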